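(* Let $a\neq b$ be decimal digits and $n\ge 2$, and suppose $B_n(a,b)$ is an absolute prime. Let $p$ be a prime such that $n>p-1$, $10$ is a primitive root modulo $p$ (i.e. $h(p)=p-1$), and $\gcd(a,p)=1$. Then $(p-1)\mid n$.
   Context: For a positive integer $N$ with decimal representation $d_1d_2\dots d_n$ (digits $d_k\in\{0,\dots,9\}$, $d_1\neq 0$), a permutation of the digits of $N$ is any integer $\sum_{k=1}^{n} d_{\sigma(k)}10^{n-k}$ with $\sigma$ a permutation of $\{1,\dots,n\}$. $N$ is called an absolute prime if every integer obtained by a permutation of the digits of $N$ (including $N$ itself) is prime. The repunit $A_n=(10^n-1)/9$ is the $n$-digit integer all of whose digits are $1$. For digits $a,b$ and $n\ge 1$, $B_n(a,b)=a\cdot A_n+(b-a)$ is the $n$-digit integer whose first $n-1$ digits are $a$ and whose last digit is $b$. For a prime $p\notin\{2,5\}$, $h(p)$ denotes the multiplicative order of $10$ modulo $p$; $10$ is a primitive root modulo $p$ when $h(p)=p-1$. *)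

theory Defs
  imports "HOL-Number_Theory.Number_Theory" "HOL-Library.Multiset"
begin

fun dec_digits :: "nat \<Rightarrow> nat list" where
  "dec_digits m = (if m < 10 then [m] else dec_digits (m div 10) @ [m mod 10])"

definition from_digits :: "nat list \<Rightarrow> nat" where
  "from_digits ds = foldl (\<lambda>acc d. 10 * acc + d) 0 ds"

definition absolute_prime :: "nat \<Rightarrow> bool" where
  "absolute_prime N \<longleftrightarrow> N > 0 \<and>
     (\<forall>ys. mset ys = mset (dec_digits N) \<longrightarrow> prime (from_digits ys))"

definition repunit :: "nat \<Rightarrow> nat" where
  "repunit n = (10 ^ n - 1) div 9"

text \<open>B_n(a,b) = a A_n + (b - a); computed in nat as (a A_n + b) - a, exact for n >= 1.\<close>
definition B :: "nat \<Rightarrow> nat \<Rightarrow> nat \<Rightarrow> nat" where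
  "B n a b = a * repunit n + b - a"

end

theory Submission
  imports Defs
begin

text \<open>Every rearrangement of the digits of \<open>B\<^sub>n(a,b)\<close> moving \<open>b\<close> to the position of
\<open>10\<^sup>k\<close> is a prime \<open>P\<^sub>k\<close> with \<open>9 P\<^sub>k = a (10\<^sup>n - 1) + 9 (b - a) 10\<^sup>k\<close>. If \<open>p - 1\<close> did
not divide \<open>n\<close>, then \<open>p\<close> divides neither \<open>a (10\<^sup>n - 1)\<close> nor \<open>9 (b - a)\<close> (the digits of an
absolute prime are odd, so \<open>b - a\<close> is a nonzero even number of size below \<open>2p\<close>). As
\<open>10\<close> is a primitive root, some \<open>10\<^sup>k\<close> with \<open>k < p - 1 < n\<close> solves
\<open>a (10\<^sup>n - 1) + 9 (b - a) 10\<^sup>k \<equiv> 0 (mod p)\<close>, so \<open>p\<close> divides the prime \<open>P\<^sub>k\<close>, which is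
much larger than \<open>p\<close>.\<close>

declare dec_digits.simps [simp del]

lemma nine_dvd_ten_power_minus_one: "9 dvd (10::nat) ^ m - 1"
proof -
  have "[(10::nat) ^ m = 1 ^ m] (mod 9)"
    by (intro cong_pow) (simp add: cong_def)
  then show ?thesis
    by (intro cong_to_1_nat) simp
qed

lemma nine_times_repunit: "9 * repunit m = 10 ^ m - 1"
  using nine_dvd_ten_power_minus_one[of m] by (simp add: repunit_def)

lemma nine_times_repunit_int: "9 * int (repunit m) = 10 ^ m - 1"
proof -
  have "int (9 * repunit m) = int (10 ^ m) - 1"
    by (simp add: nine_times_repunit of_nat_diff)
  then show ?thesis
    by simp
qed

lemma repunit_Suc: "repunit (Suc m) = 10 * repunit m + 1"
proof -
  have "9 * repunit (Suc m) = 10 * (9 * repunit m) + 9"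
    unfolding nine_times_repunit using one_le_power[of "10::nat" m] by (simp add: diff_mult_distrib2)
  then show ?thesis
    by simp
qed

lemma ten_power_le_repunit_Suc: "10 ^ m \<le> repunit (Suc m)"
  by (induction m) (simp_all add: repunit_Suc repunit_def)

lemma from_digits_Nil [simp]: "from_digits [] = 0"
  by (simp add: from_digits_def)

lemma from_digits_snoc: "from_digits (xs @ [d]) = 10 * from_digits xs + d"
  by (simp add: from_digits_def)

lemma from_digits_append:
  "from_digits (xs @ ys) = from_digits xs * 10 ^ length ys + from_digits ys"
proof (induction ys rule: rev_induct)
  case (snoc y ys)
  then show ?case
    using from_digits_snoc[of "xs @ ys" y] from_digits_snoc[of ys y]
    by (simp add: algebra_simps)
qed simp

lemma from_digits_Cons: "from_digits (d # xs) = d * 10 ^ length xs + from_digits xs"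
  using from_digits_append[of "[d]" xs] by (simp add: from_digits_def)

lemma from_digits_replicate: "from_digits (replicate m d) = d * repunit m"
proof (induction m)
  case (Suc m)
  have "replicate (Suc m) d = replicate m d @ [d]"
    by (simp add: replicate_append_same)
  with Suc show ?case
    by (simp add: from_digits_snoc repunit_Suc algebra_simps)
qed (simp add: repunit_def)

lemma dec_digits_from_digits:
  assumes "ds \<noteq> []" "\<forall>d\<in>set ds. d < 10" "hd ds \<noteq> 0"
  shows "dec_digits (from_digits ds) = ds"
  using assms
proof (induction ds rule: rev_induct)
  case (snoc x xs)
  show ?case
  proof (cases "xs = []")
    case True
    with snoc show ?thesis
      by (simp add: from_digits_def dec_digits.simps)
  next
    case False
    with snoc have IH: "dec_digits (from_digits xs) = xs"
      by simp
    have "from_digits xs \<noteq> 0"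
    proof
      assume "from_digits xs = 0"
      then have "xs = [0]"
        using IH by (simp add: dec_digits.simps)
      with snoc.prems(3) False show False
        by simp
    qed
    moreover have "x < 10"
      using snoc.prems(2) by simp
    ultimately show ?thesis
      by (subst dec_digits.simps) (simp add: from_digits_snoc IH)
  qed
qed simp

definition near_repdigit :: "nat \<Rightarrow> nat \<Rightarrow> nat \<Rightarrow> nat \<Rightarrow> nat" where
  "near_repdigit j a b k = from_digits (replicate j a @ b # replicate k a)"

lemma near_repdigit_eq:
  "near_repdigit j a b k = (10 * a * repunit j + b) * 10 ^ k + a * repunit k"
  by (simp add: near_repdigit_def from_digits_append from_digits_Cons from_digits_replicate
      power_Suc algebra_simps)

lemma nine_times_near_repdigit:
  "9 * int (near_repdigit j a b k) = int a * (10 ^ (j + 1 + k) - 1) + 9 * (int b - int a) * 10 ^ k"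
proof -
  have "9 * int (near_repdigit j a b k)
      = 10 * int a * (9 * int (repunit j)) * 10 ^ k + 9 * int b * 10 ^ k + int a * (9 * int (repunit k))"
    by (simp add: near_repdigit_eq algebra_simps)
  also have "\<dots> = 10 * int a * (10 ^ j - 1) * 10 ^ k + 9 * int b * 10 ^ k + int a * (10 ^ k - 1)"
    by (simp only: nine_times_repunit_int)
  finally show ?thesis
    by (simp add: power_add algebra_simps)
qed

lemma near_repdigit_ge:
  assumes "0 < a" "0 < j + k"
  shows "10 ^ (j + k - 1) \<le> near_repdigit j a b k"
proof -
  have "repunit (j + k) = from_digits (replicate j 1 @ replicate k 1)"
    by (simp add: from_digits_replicate flip: replicate_add)
  also have "\<dots> = repunit j * 10 ^ k + repunit k"
    by (simp add: from_digits_append from_digits_replicate)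
  also have "\<dots> \<le> (10 * a * repunit j + b) * 10 ^ k + a * repunit k"
    using assms(1) by (intro add_mono mult_le_mono1) (simp_all add: trans_le_add1)
  also have "\<dots> = near_repdigit j a b k"
    by (simp add: near_repdigit_eq)
  finally show ?thesis
    using ten_power_le_repunit_Suc[of "j + k - 1"] assms(2) by simp
qed

lemma B_eq_from_digits: "B (Suc m) a b = from_digits (replicate m a @ [b])"
  by (simp add: B_def repunit_Suc from_digits_snoc from_digits_replicate algebra_simps)

lemma prime_near_repdigit_of_absolute_prime_B:
  assumes "a < 10" "b < 10" "0 < a" "0 < j + k"
    and "absolute_prime (B (Suc (j + k)) a b)"
  shows "prime (near_repdigit j a b k)"
proof -
  have "dec_digits (B (Suc (j + k)) a b) = replicate (j + k) a @ [b]"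
    unfolding B_eq_from_digits using assms(1-4)
    by (intro dec_digits_from_digits) (auto simp: hd_append)
  then have "mset (replicate j a @ b # replicate k a) = mset (dec_digits (B (Suc (j + k)) a b))"
    by (simp add: replicate_add)
  then show ?thesis
    using assms(5) by (simp add: absolute_prime_def near_repdigit_def)
qed

text \<open>Putting \<open>b\<close>, resp. \<open>a\<close>, in the units place yields a prime larger than \<open>2\<close>.\<close>

lemma absolute_prime_B_odd_digits:
  assumes "a < 10" "b < 10" "0 < a" "2 \<le> m"
    and "absolute_prime (B (Suc m) a b)"
  shows "odd a \<and> odd b"
proof -
  have "odd (near_repdigit j a b k)" if "j + k = m" for j k
  proof -
    have "0 < j + k" "absolute_prime (B (Suc (j + k)) a b)"
      using that assms(4,5) by auto
    then have prime: "prime (near_repdigit j a b k)"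
      by (rule prime_near_repdigit_of_absolute_prime_B[OF assms(1-3)])
    have "(10::nat) ^ 1 \<le> 10 ^ (m - 1)"
      using assms(4) by (intro power_increasing) auto
    then have "2 < near_repdigit j a b k"
      using near_repdigit_ge[OF assms(3), of j k b] that assms(4) by simp
    with prime show ?thesis
      using prime_odd_nat by blast
  qed
  then have "odd (near_repdigit m a b 0)" "odd (near_repdigit (m - 1) a b 1)"
    using assms(4) by simp_all
  then show ?thesis
    by (simp add: near_repdigit_eq repunit_def)
qed

lemma primitive_root_power_cong:
  fixes c :: int
  assumes "prime p" "ord p g = p - 1" "\<not> int p dvd c"
  shows "\<exists>k < p - 1. [int g ^ k = c] (mod int p)"
proof -
  have "1 < p"
    using assms(1) prime_gt_1_nat by blast
  then have "coprime p g"
    using assms(2) ord_gt_0_iff[of p g] by simp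
  then have "residue_primroot p g"
    using \<open>1 < p\<close> assms(1,2) by (simp add: residue_primroot_def totient_prime)
  then have powers: "(\<lambda>i. g ^ i mod p) ` {..<p - 1} = totatives p"
    using residue_primroot_is_generator[OF \<open>1 < p\<close>] assms(1)
    by (simp add: bij_betw_def totient_prime)
  have "c mod int p \<noteq> 0" "0 \<le> c mod int p" "c mod int p < int p"
    using assms(3) \<open>1 < p\<close> by (simp_all add: mod_eq_0_iff_dvd)
  then have "nat (c mod int p) \<in> totatives p"
    using assms(1) by (simp add: totatives_prime)
  then obtain k where "k < p - 1" "g ^ k mod p = nat (c mod int p)"
    unfolding powers[symmetric] by auto
  then have "int g ^ k mod int p = c mod int p"
    using \<open>1 < p\<close> by (metis int_nat_eq of_nat_mod of_nat_power pos_mod_sign of_nat_0_less_iff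
        order.strict_trans[OF zero_less_one])
  with \<open>k < p - 1\<close> show ?thesis
    by (auto simp: cong_def)
qed

lemma primitive_root_linear_cong:
  fixes u w :: int
  assumes "prime p" "ord p g = p - 1" "\<not> int p dvd u" "\<not> int p dvd w"
  shows "\<exists>k < p - 1. int p dvd w + u * int g ^ k"
proof -
  have prime_p: "prime (int p)"
    using assms(1) by simp
  obtain t where t: "[u * t = 1] (mod int p)"
    using assms(3) prime_imp_coprime[OF prime_p] cong_solve_coprime_int
    by (metis coprime_commute)
  have "[- w * t * u = - w] (mod int p)"
    using cong_mult[OF cong_refl[of "- w"] t] by (simp add: algebra_simps)
  then have "\<not> int p dvd - w * t"
    using assms(4) cong_dvd_iff by fastforce
  then obtain k where k: "k < p - 1" "[int g ^ k = - w * t] (mod int p)"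
    using primitive_root_power_cong[OF assms(1,2)] by blast
  have "[w + u * int g ^ k = w + u * (- w * t)] (mod int p)"
    using k(2) by (intro cong_add cong_mult cong_refl)
  also have "w + u * (- w * t) = w * (1 - u * t)"
    by (simp add: algebra_simps)
  also have "[\<dots> = w * 0] (mod int p)"
    using t by (intro cong_mult cong_refl) (simp add: cong_sym cong_diff_iff_cong_0)
  finally show ?thesis
    using k(1) by (auto simp: cong_0_iff)
qed

lemma prime_not_dvd_times_ten_power_minus_one:
  assumes "prime p" "ord p 10 = p - 1" "coprime a p" "\<not> (p - 1) dvd n"
  shows "\<not> int p dvd int a * (10 ^ n - 1)"
proof -
  have "\<not> p dvd a"
    using assms(1,3) by (meson coprime_commute dvd_refl not_coprimeI not_prime_unit)
  then have "\<not> int p dvd int a"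
    by simp
  moreover have "\<not> int p dvd 10 ^ n - 1"
  proof
    assume "int p dvd 10 ^ n - 1"
    then have "[10 ^ n = 1] (mod p)"
      by (simp add: cong_iff_dvd_diff flip: cong_int_iff)
    then have "ord p 10 dvd n"
      by (rule ord_divides[THEN iffD1])
    with assms(2,4) show False
      by simp
  qed
  ultimately show ?thesis
    using assms(1) by (simp add: prime_dvd_mult_iff)
qed

lemma prime_dvd_some_near_repdigit:
  assumes "prime p" "ord p 10 = p - 1" "coprime a p"
    and "\<not> int p dvd 9 * (int b - int a)"
    and "\<not> (p - 1) dvd Suc m" "p - 1 \<le> m"
  shows "\<exists>k \<le> m. p dvd near_repdigit (m - k) a b k"
proof -
  obtain k where k: "k < p - 1" "int p dvd int a * (10 ^ Suc m - 1) + 9 * (int b - int a) * 10 ^ k"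
    using primitive_root_linear_cong[OF assms(1,2,4) prime_not_dvd_times_ten_power_minus_one[OF assms(1-3,5)]]
    by (auto simp: mult.assoc)
  with assms(6) have "int p dvd 9 * int (near_repdigit (m - k) a b k)"
    by (simp add: nine_times_near_repdigit)
  moreover have "\<not> int p dvd 9"
    using assms(4) by auto
  ultimately show ?thesis
    using k(1) assms(1,6) by (intro exI[of _ k]) (auto simp: prime_dvd_mult_iff)
qed

lemma Suc_less_ten_power:
  assumes "2 \<le> m"
  shows "Suc m < 10 ^ (m - 1)"
  using assms
proof (induction m rule: dec_induct)
  case (step m)
  then have "(10::nat) ^ (Suc m - 1) = 10 * 10 ^ (m - 1)"
    by (simp flip: power_Suc)
  with step.IH show ?case
    by simp
qed simp

lemma prime_not_dvd_nine_times_odd_digit_diff: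
  assumes "prime p" "7 \<le> p" "a < 10" "b < 10" "a \<noteq> b" "odd a" "odd b"
  shows "\<not> int p dvd 9 * (int b - int a)"
proof
  assume dvd: "int p dvd 9 * (int b - int a)"
  have "\<not> p dvd 3"
    using assms(2) by (auto dest: dvd_imp_le)
  then have "\<not> p dvd 3 ^ 2"
    using prime_dvd_power[OF assms(1)] by blast
  then have "\<not> int p dvd 9"
    using int_dvd_int_iff[of p 9] by simp
  moreover have "int p dvd 9 \<or> int p dvd int b - int a"
    using assms(1) dvd by (intro prime_dvd_multD) simp_all
  ultimately have "int p dvd int b - int a"
    by blast
  moreover have "2 dvd int b - int a" "coprime 2 (int p)"
    using assms(1,2,6,7) prime_odd_nat[OF assms(1)] by auto
  ultimately have "2 * int p dvd int b - int a"
    by (simp add: divides_mult)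
  then have "2 * int p \<le> \<bar>int b - int a\<bar>"
    using assms(5) dvd_imp_le_int[of "int b - int a"] by fastforce
  with assms(2-4) show False
    by linarith
qed

lemma prime_with_primitive_root_10_ge_7:
  assumes "prime p" "p \<noteq> 2" "p \<noteq> 5" "ord p 10 = p - 1"
  shows "7 \<le> p"
proof -
  have "p \<noteq> 3"
  proof
    assume "p = 3"
    then have "[10 ^ 1 = 1] (mod p)"
      by (simp add: cong_def)
    then have "p - 1 dvd 1"
      unfolding ord_divides assms(4) .
    with \<open>p = 3\<close> show False
      by simp
  qed
  moreover have "2 < p"
    using assms(2) prime_ge_2_nat[OF assms(1)] by simp
  ultimately show ?thesis
    using prime_odd_nat[OF assms(1)] assms(3) by presburger
qed

lemma small_prime_not_dvd_near_repdigit: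
  assumes "a < 10" "b < 10" "0 < a" "2 \<le> m"
    and "absolute_prime (B (Suc m) a b)"
    and "prime p" "p \<le> Suc m" "k \<le> m"
  shows "\<not> p dvd near_repdigit (m - k) a b k"
proof
  assume "p dvd near_repdigit (m - k) a b k"
  moreover have "prime (near_repdigit (m - k) a b k)"
    using prime_near_repdigit_of_absolute_prime_B[OF assms(1-3), of "m - k" k] assms(4,5,8)
    by simp
  ultimately have "p = near_repdigit (m - k) a b k"
    using assms(6) by (intro primes_dvd_imp_eq)
  also have "\<dots> \<ge> 10 ^ (m - 1)"
    using near_repdigit_ge[OF assms(3), of "m - k" k b] assms(4,8) by simp
  finally show False
    using Suc_less_ten_power[OF assms(4)] assms(7) by simp
qed

theorem lemma6:
  fixes a b n p :: nat
  assumes "a < 10" and "b < 10" and "a \<noteq> b" and "n \<ge> 2"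
    and "absolute_prime (B n a b)"
    and "prime p" and "p \<noteq> 2" and "p \<noteq> 5"
    and "n > p - 1"
    and "ord p 10 = p - 1"
    and "gcd a p = 1"
  shows "(p - 1) dvd n"
proof (rule ccontr)
  assume not_dvd: "\<not> (p - 1) dvd n"
  define m where "m = n - 1"
  with assms(4) have n: "n = Suc m"
    by simp
  have "coprime a p"
    using assms(11) by (rule gcd_eq_1_imp_coprime)
  have "0 < a"
  proof (rule Nat.gr0I)
    assume "a = 0"
    with assms(6,11) show False
      by simp
  qed
  have "7 \<le> p"
    using prime_with_primitive_root_10_ge_7 assms(6-8,10) by blast
  with assms(9) n have "p - 1 \<le> m" "2 \<le> m"
    by simp_all
  have B_prime: "absolute_prime (B (Suc m) a b)"
    using assms(5) n by simp
  then have "odd a \<and> odd b"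
    by (rule absolute_prime_B_odd_digits[OF assms(1,2) \<open>0 < a\<close> \<open>2 \<le> m\<close>])
  then have "\<not> int p dvd 9 * (int b - int a)"
    using prime_not_dvd_nine_times_odd_digit_diff[OF assms(6) \<open>7 \<le> p\<close> assms(1-3)] by blast
  then obtain k where "k \<le> m" "p dvd near_repdigit (m - k) a b k"
    using prime_dvd_some_near_repdigit[OF assms(6,10) \<open>coprime a p\<close>] \<open>p - 1 \<le> m\<close> not_dvd n
    by blast
  with small_prime_not_dvd_near_repdigit[OF assms(1,2) \<open>0 < a\<close> \<open>2 \<le> m\<close> B_prime assms(6)]
    \<open>p - 1 \<le> m\<close> show False
    by simp
qed

end
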